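(* For any $n$-qubit pure states $\ket{\psi},\ket{\phi}$, $$|\mathcal{C}(\ket{\psi})-\mathcal{C}(\ket{\phi})|\le\sqrt2\,D_{tr}(\ket{\psi}\!\bra{\psi},\ket{\phi}\!\bra{\phi}).$$
   Context: $D_{tr}(\rho,\sigma)=\frac12\|\rho-\sigma\|_1$ is the trace distance. $\mathcal{C}(\ket{\psi})=1-\frac{1}{2^{n}}\sum_{\alpha\subseteq [n]}\mathrm{Tr}[\rho_\alpha^2]$, with $\rho_\alpha$ the reduced state of $\ket{\psi}$ on $\alpha$ and $\mathrm{Tr}[\rho_\emptyset^2]=1$. *)

theory Defs
  imports "Jordan_Normal_Form.Char_Poly"
begin

text \<open>An n-qubit pure state is a normalized vector of 2^n complex amplitudes, indexed by
  the computational basis states i < 2^n; qubit k of basis state i is the k-th bit of i.\<close>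

definition pure_state :: "nat \<Rightarrow> (nat \<Rightarrow> complex) \<Rightarrow> bool" where
  "pure_state n \<psi> \<longleftrightarrow> (\<Sum>i<2^n. (cmod (\<psi> i))\<^sup>2) = 1"

definition proj :: "nat \<Rightarrow> (nat \<Rightarrow> complex) \<Rightarrow> complex mat" where
  "proj n \<psi> = mat (2^n) (2^n) (\<lambda>(i,j). \<psi> i * cnj (\<psi> j))"

definition ctrans :: "complex mat \<Rightarrow> complex mat" where
  "ctrans A = mat (dim_col A) (dim_row A) (\<lambda>(i,j). cnj (A $$ (j,i)))"

text \<open>Trace norm: sum of the singular values of A (with multiplicity), i.e. the sum of
  the square roots of the eigenvalues of A^* A counted with algebraic multiplicity.\<close>
definition trace_norm :: "complex mat \<Rightarrow> real" where
  "trace_norm A = (\<Sum>z\<in>{z. poly (char_poly (ctrans A * A)) z = 0}.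
       real (order z (char_poly (ctrans A * A))) * sqrt (Re z))"

definition trace_dist :: "complex mat \<Rightarrow> complex mat \<Rightarrow> real" where
  "trace_dist \<rho> \<sigma> = trace_norm (\<rho> - \<sigma>) / 2"

text \<open>Basis indices (< 2^n) of the subsystem alpha: all bits outside alpha are zero.
  Reduced state rho_alpha on these indices (partial trace over the complement of alpha).\<close>
definition sub_idx :: "nat \<Rightarrow> nat set \<Rightarrow> nat set" where
  "sub_idx n \<alpha> = {i. i < 2^n \<and> (\<forall>b. \<not> b \<in> \<alpha> \<longrightarrow> \<not> bit i b)}"

definition reduced :: "nat \<Rightarrow> (nat \<Rightarrow> complex) \<Rightarrow> nat set \<Rightarrow> nat \<Rightarrow> nat \<Rightarrow> complex" where
  "reduced n \<psi> \<alpha> i j = (\<Sum>k\<in>sub_idx n ({0..<n} - \<alpha>). \<psi> (i + k) * cnj (\<psi> (j + k)))"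

definition purity :: "nat \<Rightarrow> (nat \<Rightarrow> complex) \<Rightarrow> nat set \<Rightarrow> real" where
  "purity n \<psi> \<alpha> = Re (\<Sum>i\<in>sub_idx n \<alpha>. \<Sum>j\<in>sub_idx n \<alpha>. reduced n \<psi> \<alpha> i j * reduced n \<psi> \<alpha> j i)"

definition C_ent :: "nat \<Rightarrow> (nat \<Rightarrow> complex) \<Rightarrow> real" where
  "C_ent n \<psi> = 1 - (\<Sum>\<alpha>\<in>Pow {0..<n}. purity n \<psi> \<alpha>) / 2^n"

end

theory Submission
  imports Defs "Jordan_Normal_Form.Schur_Decomposition" "HOL-Analysis.L2_Norm"
begin

text \<open>
  Let X = psi \<otimes> psi be the state of two copies of psi. The purity Tr rho_alpha^2 equals
  <X, SWAP_alpha X>, where SWAP_alpha exchanges the qubits in alpha between the two copies.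
  Composing swaps takes the symmetric difference of the subsystems, so the swaps form a group
  and their average P is an orthogonal projection with C(psi) = 1 - |P X|^2.
  Splitting <X, Y> = <P X, P Y> + <(1 - P) X, (1 - P) Y> and applying Cauchy-Schwarz gives
  |<psi, phi>|^2 = |<X, Y>| \<le> a b + a' b' for the unit vectors (a, a') = (|P X|, |(1 - P) X|)
  and (b, b') = (|P Y|, |(1 - P) Y|) of the plane. An elementary planar inequality then bounds
  |a^2 - b^2| by sqrt 2 * sqrt (1 - |<psi, phi>|^2), and the square root is the trace distance
  of the two pure states: their difference of projectors has the two eigenvalues
  \<plusminus>sqrt (1 - |<psi, phi>|^2).
\<close>

unbundle bit_operations_syntax

section \<open>Orthogonal projections on finitely indexed vectors\<close>

definition inner_on :: "'a set \<Rightarrow> ('a \<Rightarrow> complex) \<Rightarrow> ('a \<Rightarrow> complex) \<Rightarrow> complex" where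
  "inner_on S f g = (\<Sum>p\<in>S. f p * cnj (g p))"

definition norm_on :: "'a set \<Rightarrow> ('a \<Rightarrow> complex) \<Rightarrow> real" where
  "norm_on S f = L2_set (\<lambda>p. cmod (f p)) S"

lemma inner_on_self: "inner_on S f f = of_real ((norm_on S f)\<^sup>2)"
proof -
  have "(norm_on S f)\<^sup>2 = (\<Sum>p\<in>S. (cmod (f p))\<^sup>2)"
    by (simp add: norm_on_def L2_set_def sum_nonneg)
  then show ?thesis
    by (simp only: inner_on_def of_real_sum complex_norm_square)
qed

lemma inner_on_commute: "inner_on S g f = cnj (inner_on S f g)"
  by (simp add: inner_on_def mult.commute)

lemma inner_on_diff_left: "inner_on S (\<lambda>p. f p - g p) h = inner_on S f h - inner_on S g h"
  by (simp add: inner_on_def algebra_simps sum_subtractf)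

lemma inner_on_diff_right: "inner_on S f (\<lambda>p. g p - h p) = inner_on S f g - inner_on S f h"
  by (simp add: inner_on_def algebra_simps sum_subtractf)

lemma norm_inner_on_le: "cmod (inner_on S f g) \<le> norm_on S f * norm_on S g"
proof -
  have "cmod (inner_on S f g) \<le> (\<Sum>p\<in>S. \<bar>cmod (f p)\<bar> * \<bar>cmod (g p)\<bar>)"
    unfolding inner_on_def by (rule order_trans[OF norm_sum]) (simp add: norm_mult)
  also have "\<dots> \<le> norm_on S f * norm_on S g"
    unfolding norm_on_def by (rule L2_set_mult_ineq)
  finally show ?thesis .
qed

definition orth_proj_on :: "'a set \<Rightarrow> (('a \<Rightarrow> complex) \<Rightarrow> 'a \<Rightarrow> complex) \<Rightarrow> bool" where
  "orth_proj_on S P \<longleftrightarrow>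
     (\<forall>f g. inner_on S (P f) g = inner_on S f (P g)) \<and> (\<forall>f. \<forall>p\<in>S. P (P f) p = P f p)"

lemma orth_proj_on_inner_right:
  assumes "orth_proj_on S P"
  shows "inner_on S f (P g) = inner_on S (P f) (P g)"
proof -
  have "inner_on S (P f) (P g) = inner_on S f (P (P g))"
    using assms by (simp add: orth_proj_on_def)
  also have "\<dots> = inner_on S f (P g)"
    using assms unfolding inner_on_def orth_proj_on_def by (intro sum.cong) auto
  finally show ?thesis by simp
qed

lemma orth_proj_on_inner_decomp:
  assumes "orth_proj_on S P"
  shows "inner_on S f g = inner_on S (P f) (P g) + inner_on S (\<lambda>p. f p - P f p) (\<lambda>p. g p - P g p)"
proof -
  have "inner_on S (P f) g = inner_on S (P f) (P g)"
    using assms orth_proj_on_inner_right by (metis orth_proj_on_def)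
  then show ?thesis
    using orth_proj_on_inner_right[OF assms, of f g]
    by (simp add: inner_on_diff_left inner_on_diff_right)
qed

lemma orth_proj_on_pythagoras:
  assumes "orth_proj_on S P"
  shows "(norm_on S f)\<^sup>2 = (norm_on S (P f))\<^sup>2 + (norm_on S (\<lambda>p. f p - P f p))\<^sup>2"
proof -
  have "complex_of_real ((norm_on S f)\<^sup>2)
      = of_real ((norm_on S (P f))\<^sup>2 + (norm_on S (\<lambda>p. f p - P f p))\<^sup>2)"
    using orth_proj_on_inner_decomp[OF assms, of f f] by (simp add: inner_on_self)
  then show ?thesis
    by (simp only: of_real_eq_iff)
qed

lemma orth_proj_on_norm_inner_le:
  assumes "orth_proj_on S P"
  shows "cmod (inner_on S f g) \<le> norm_on S (P f) * norm_on S (P g)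
           + norm_on S (\<lambda>p. f p - P f p) * norm_on S (\<lambda>p. g p - P g p)"
  unfolding orth_proj_on_inner_decomp[OF assms, of f g]
  by (rule order_trans[OF norm_triangle_ineq]) (intro add_mono norm_inner_on_le)

section \<open>Splitting basis indices into subsystems\<close>

lemma less_power2_iff_bits: "(x::nat) < 2^n \<longleftrightarrow> (\<forall>b. bit x b \<longrightarrow> b < n)"
proof -
  have "x < 2^n \<longleftrightarrow> take_bit n x = x" by (simp add: take_bit_nat_eq_self_iff)
  also have "\<dots> \<longleftrightarrow> (\<forall>b. bit x b \<longrightarrow> b < n)" by (auto simp: bit_eq_iff bit_take_bit_iff)
  finally show ?thesis .
qed

lemma add_eq_or_if_disjoint_bits:
  fixes i k :: nat
  assumes "\<And>b. \<not> (bit i b \<and> bit k b)"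
  shows "i + k = i OR k"
  by (rule disjunctive_add_eq_or) (use assms in \<open>auto simp: bit_eq_iff bit_and_iff\<close>)

definition set_mask :: "nat set \<Rightarrow> nat" where
  "set_mask A = (\<Sum>b\<in>A. 2^b)"

lemma bit_set_mask_iff: "finite A \<Longrightarrow> bit (set_mask A) b \<longleftrightarrow> b \<in> A"
proof (induction A arbitrary: b rule: finite_induct)
  case empty
  then show ?case by (simp add: set_mask_def)
next
  case (insert a A)
  have "set_mask (insert a A) = 2^a + set_mask A"
    using insert by (simp add: set_mask_def)
  also have "\<dots> = 2^a OR set_mask A"
    using insert by (intro add_eq_or_if_disjoint_bits) (auto simp: bit_exp_iff)
  finally show ?case
    using insert by (auto simp: bit_or_iff bit_exp_iff)
qed

definition restrict_bits :: "nat set \<Rightarrow> nat \<Rightarrow> nat" where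
  "restrict_bits A x = x AND set_mask A"

lemma bit_restrict_bits_iff: "finite A \<Longrightarrow> bit (restrict_bits A x) b \<longleftrightarrow> bit x b \<and> b \<in> A"
  by (simp add: restrict_bits_def bit_and_iff bit_set_mask_iff)

lemma sub_idx_iff_bits: "A \<subseteq> {0..<n} \<Longrightarrow> i \<in> sub_idx n A \<longleftrightarrow> (\<forall>b. bit i b \<longrightarrow> b \<in> A)"
  by (auto simp: sub_idx_def less_power2_iff_bits)

lemma bij_betw_add_sub_idx:
  assumes "A \<subseteq> {0..<n}"
  shows "bij_betw (\<lambda>(i, k). i + k) (sub_idx n A \<times> sub_idx n ({0..<n} - A)) {..<2^n}"
proof (rule bij_betw_byWitness[where f' = "\<lambda>x. (restrict_bits A x, restrict_bits ({0..<n} - A) x)"])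
  have fin: "finite A" "finite ({0..<n} - A)"
    using assms finite_subset by auto
  have add_eq: "i + k = i OR k" if "i \<in> sub_idx n A" "k \<in> sub_idx n ({0..<n} - A)" for i k
    using that assms by (intro add_eq_or_if_disjoint_bits) (auto simp: sub_idx_iff_bits)
  show "\<forall>p \<in> sub_idx n A \<times> sub_idx n ({0..<n} - A).
          (restrict_bits A ((\<lambda>(i, k). i + k) p), restrict_bits ({0..<n} - A) ((\<lambda>(i, k). i + k) p)) = p"
    using assms fin
    by (auto simp: add_eq bit_eq_iff bit_or_iff bit_restrict_bits_iff sub_idx_iff_bits)
  have restrict_mem: "restrict_bits A x \<in> sub_idx n A" "restrict_bits ({0..<n} - A) x \<in> sub_idx n ({0..<n} - A)"
    for x
    using assms fin by (auto simp: sub_idx_iff_bits bit_restrict_bits_iff)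
  show "\<forall>x \<in> {..<2^n}. (\<lambda>(i, k). i + k) (restrict_bits A x, restrict_bits ({0..<n} - A) x) = x"
    using assms fin
    by (auto simp: add_eq[OF restrict_mem] bit_eq_iff bit_or_iff bit_restrict_bits_iff
        less_power2_iff_bits)
  show "(\<lambda>(i, k). i + k) ` (sub_idx n A \<times> sub_idx n ({0..<n} - A)) \<subseteq> {..<2^n}"
    using assms by (fastforce simp: add_eq less_power2_iff_bits bit_or_iff sub_idx_iff_bits)
  show "(\<lambda>x. (restrict_bits A x, restrict_bits ({0..<n} - A) x)) ` {..<2^n}
          \<subseteq> sub_idx n A \<times> sub_idx n ({0..<n} - A)"
    using restrict_mem by auto
qed

lemma sum_lessThan_power2_split:
  assumes "A \<subseteq> {0..<n}"
  shows "(\<Sum>x<2^n. f x) = (\<Sum>i\<in>sub_idx n A. \<Sum>k\<in>sub_idx n ({0..<n} - A). f (i + k))"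
  by (simp add: sum.reindex_bij_betw[OF bij_betw_add_sub_idx[OF assms], symmetric]
      sum.cartesian_product prod.case_distrib)

section \<open>Purities as expectations of swap operators\<close>

definition basis_pairs :: "nat \<Rightarrow> (nat \<times> nat) set" where
  "basis_pairs n = {..<2^n} \<times> {..<2^n}"

definition two_copy :: "(nat \<Rightarrow> complex) \<Rightarrow> nat \<times> nat \<Rightarrow> complex" where
  "two_copy \<psi> p = \<psi> (fst p) * \<psi> (snd p)"

definition swap_bits :: "nat set \<Rightarrow> nat \<times> nat \<Rightarrow> nat \<times> nat" where
  "swap_bits A p = (let d = restrict_bits A (fst p XOR snd p) in (fst p XOR d, snd p XOR d))"

lemma bit_swap_bits_iff:
  assumes "finite A"
  shows "bit (fst (swap_bits A p)) b \<longleftrightarrow> (if b \<in> A then bit (snd p) b else bit (fst p) b)"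
    and "bit (snd (swap_bits A p)) b \<longleftrightarrow> (if b \<in> A then bit (fst p) b else bit (snd p) b)"
  using assms by (auto simp: swap_bits_def Let_def bit_xor_iff bit_restrict_bits_iff)

lemma swap_bits_empty [simp]: "swap_bits {} p = p"
  by (simp add: swap_bits_def restrict_bits_def set_mask_def)

lemma swap_bits_swap_bits:
  assumes "finite A" "finite B"
  shows "swap_bits B (swap_bits A p) = swap_bits ((A - B) \<union> (B - A)) p"
proof -
  have "finite ((A - B) \<union> (B - A))"
    using assms by simp
  then show ?thesis
    using assms by (auto simp: prod_eq_iff bit_eq_iff bit_swap_bits_iff)
qed

lemma swap_bits_involution: "finite A \<Longrightarrow> swap_bits A (swap_bits A p) = p"
  by (simp add: swap_bits_swap_bits)

lemma swap_bits_in_basis_pairs: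
  "finite A \<Longrightarrow> p \<in> basis_pairs n \<Longrightarrow> swap_bits A p \<in> basis_pairs n"
  by (simp add: basis_pairs_def mem_Times_iff less_power2_iff_bits bit_swap_bits_iff)

lemma swap_bits_add:
  assumes A: "A \<subseteq> {0..<n}"
    and "i \<in> sub_idx n A" "j \<in> sub_idx n A"
    and "k \<in> sub_idx n ({0..<n} - A)" "l \<in> sub_idx n ({0..<n} - A)"
  shows "swap_bits A (i + k, j + l) = (j + k, i + l)"
proof -
  have "finite A"
    using A finite_subset by blast
  moreover have "i + k = i OR k" "j + l = j OR l" "j + k = j OR k" "i + l = i OR l"
    using assms by (auto intro!: add_eq_or_if_disjoint_bits simp: sub_idx_iff_bits)
  ultimately show ?thesis
    using assms by (auto simp: prod_eq_iff bit_eq_iff bit_swap_bits_iff bit_or_iff sub_idx_iff_bits)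
qed

lemma purity_eq_inner_swap_bits:
  assumes A: "A \<subseteq> {0..<n}"
  shows "purity n \<psi> A = Re (inner_on (basis_pairs n) (two_copy \<psi>) (two_copy \<psi> \<circ> swap_bits A))"
proof -
  let ?S = "sub_idx n A" and ?T = "sub_idx n ({0..<n} - A)"
  let ?G = "\<lambda>p. two_copy \<psi> p * cnj (two_copy \<psi> (swap_bits A p))"
  have "inner_on (basis_pairs n) (two_copy \<psi>) (two_copy \<psi> \<circ> swap_bits A) = (\<Sum>x<2^n. \<Sum>y<2^n. ?G (x, y))"
    by (simp add: inner_on_def basis_pairs_def sum.cartesian_product case_prod_beta)
  also have "\<dots> = (\<Sum>i\<in>?S. \<Sum>k\<in>?T. \<Sum>j\<in>?S. \<Sum>l\<in>?T. ?G (i + k, j + l))"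
    by (simp add: sum_lessThan_power2_split[OF A])
  also have "\<dots> = (\<Sum>i\<in>?S. \<Sum>k\<in>?T. \<Sum>j\<in>?S. \<Sum>l\<in>?T.
                    \<psi> (i + k) * cnj (\<psi> (j + k)) * (\<psi> (j + l) * cnj (\<psi> (i + l))))"
    by (intro sum.cong refl) (simp add: swap_bits_add[OF A] two_copy_def algebra_simps)
  also have "\<dots> = (\<Sum>i\<in>?S. \<Sum>j\<in>?S. \<Sum>k\<in>?T. \<Sum>l\<in>?T.
                    \<psi> (i + k) * cnj (\<psi> (j + k)) * (\<psi> (j + l) * cnj (\<psi> (i + l))))"
    by (intro sum.cong refl sum.swap)
  also have "\<dots> = (\<Sum>i\<in>?S. \<Sum>j\<in>?S. reduced n \<psi> A i j * reduced n \<psi> A j i)"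
    by (simp add: reduced_def sum_product)
  finally show ?thesis
    by (simp add: purity_def)
qed

definition swap_average :: "nat \<Rightarrow> (nat \<times> nat \<Rightarrow> complex) \<Rightarrow> nat \<times> nat \<Rightarrow> complex" where
  "swap_average n f p = (\<Sum>A\<in>Pow {0..<n}. f (swap_bits A p)) / 2^n"

lemma inner_on_swap_average_left:
  "inner_on S (swap_average n f) g = (\<Sum>A\<in>Pow {0..<n}. inner_on S (f \<circ> swap_bits A) g) / 2^n"
  by (simp add: inner_on_def swap_average_def sum_divide_distrib sum_distrib_right sum.swap[of _ S])

lemma inner_on_swap_average_right:
  "inner_on S f (swap_average n g) = (\<Sum>A\<in>Pow {0..<n}. inner_on S f (g \<circ> swap_bits A)) / 2^n"
  by (simp add: inner_on_def swap_average_def sum_divide_distrib sum_distrib_left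
      sum.swap[of _ S])

lemma inner_on_swap_bits:
  assumes "finite A"
  shows "inner_on (basis_pairs n) (f \<circ> swap_bits A) g = inner_on (basis_pairs n) f (g \<circ> swap_bits A)"
  unfolding inner_on_def
  by (rule sum.reindex_bij_witness[where i = "swap_bits A" and j = "swap_bits A"])
    (simp_all add: assms swap_bits_involution swap_bits_in_basis_pairs)

lemma sum_Pow_symmetric_diff:
  assumes "A \<subseteq> U"
  shows "(\<Sum>C\<in>Pow U. h ((A - C) \<union> (C - A))) = (\<Sum>C\<in>Pow U. h C)"
  by (rule sum.reindex_bij_witness[where i = "\<lambda>C. (A - C) \<union> (C - A)" and j = "\<lambda>C. (A - C) \<union> (C - A)"])
    (use assms in auto)

lemma swap_average_idem: "swap_average n (swap_average n f) = swap_average n f"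
proof
  fix p
  have "(\<Sum>C\<in>Pow {0..<n}. f (swap_bits C (swap_bits A p))) = (\<Sum>C\<in>Pow {0..<n}. f (swap_bits C p))"
    if "A \<in> Pow {0..<n}" for A
  proof -
    have "finite A" "\<forall>C\<in>Pow {0..<n}. finite C"
      using that finite_subset by auto
    then have "(\<Sum>C\<in>Pow {0..<n}. f (swap_bits C (swap_bits A p)))
        = (\<Sum>C\<in>Pow {0..<n}. f (swap_bits ((A - C) \<union> (C - A)) p))"
      by (intro sum.cong refl) (simp add: swap_bits_swap_bits)
    also have "\<dots> = (\<Sum>C\<in>Pow {0..<n}. f (swap_bits C p))"
      using that by (intro sum_Pow_symmetric_diff) auto
    finally show ?thesis .
  qed
  then show "swap_average n (swap_average n f) p = swap_average n f p"
    by (simp add: swap_average_def card_Pow)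
qed

lemma orth_proj_on_swap_average: "orth_proj_on (basis_pairs n) (swap_average n)"
proof -
  have "inner_on (basis_pairs n) (swap_average n f) g = inner_on (basis_pairs n) f (swap_average n g)"
    for f g
    unfolding inner_on_swap_average_left inner_on_swap_average_right
    by (intro arg_cong[where f = "\<lambda>x. x / 2^n"] sum.cong refl inner_on_swap_bits)
      (auto intro: finite_subset)
  then show ?thesis
    by (simp add: orth_proj_on_def swap_average_idem)
qed

lemma C_ent_eq_norm_swap_average:
  "C_ent n \<psi> = 1 - (norm_on (basis_pairs n) (swap_average n (two_copy \<psi>)))\<^sup>2"
proof -
  let ?X = "two_copy \<psi>" and ?S = "basis_pairs n"
  have "(\<Sum>A\<in>Pow {0..<n}. purity n \<psi> A) = Re (\<Sum>A\<in>Pow {0..<n}. inner_on ?S ?X (?X \<circ> swap_bits A))"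
    by (simp add: purity_eq_inner_swap_bits)
  also have "(\<Sum>A\<in>Pow {0..<n}. inner_on ?S ?X (?X \<circ> swap_bits A)) = 2^n * inner_on ?S ?X (swap_average n ?X)"
    by (simp add: inner_on_swap_average_right)
  also have "inner_on ?S ?X (swap_average n ?X) = of_real ((norm_on ?S (swap_average n ?X))\<^sup>2)"
    by (simp add: orth_proj_on_inner_right[OF orth_proj_on_swap_average] inner_on_self)
  finally show ?thesis
    by (simp add: C_ent_def)
qed

lemma norm_on_two_copy:
  assumes "pure_state n \<psi>"
  shows "norm_on (basis_pairs n) (two_copy \<psi>) = 1"
proof -
  have "(\<Sum>p\<in>basis_pairs n. (cmod (two_copy \<psi> p))\<^sup>2) = (\<Sum>x<2^n. (cmod (\<psi> x))\<^sup>2) * (\<Sum>y<2^n. (cmod (\<psi> y))\<^sup>2)"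
    by (simp add: basis_pairs_def two_copy_def sum.cartesian_product norm_mult power_mult_distrib
        sum_product case_prod_beta)
  then show ?thesis
    using assms by (simp add: norm_on_def L2_set_def pure_state_def)
qed

lemma inner_on_two_copy:
  "inner_on (basis_pairs n) (two_copy \<psi>) (two_copy \<phi>) = (inner_on {..<2^n} \<psi> \<phi>)\<^sup>2"
  by (simp add: inner_on_def basis_pairs_def two_copy_def sum.cartesian_product power2_eq_square
      sum_product case_prod_beta algebra_simps)

section \<open>Trace distance of pure states\<close>

definition outer_comb ::
    "nat \<Rightarrow> (nat \<Rightarrow> complex) \<Rightarrow> (nat \<Rightarrow> complex) \<Rightarrow> complex \<Rightarrow> complex \<Rightarrow> complex \<Rightarrow> complex \<Rightarrow> complex mat"
  where "outer_comb N x y a b c d = mat N N (\<lambda>(i, j).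
     a * x i * cnj (x j) + b * x i * cnj (y j) + c * y i * cnj (x j) + d * y i * cnj (y j))"

lemma outer_comb_carrier [simp]: "outer_comb N x y a b c d \<in> carrier_mat N N"
  by (simp add: outer_comb_def)

lemma ctrans_outer_comb:
  "ctrans (outer_comb N x y a b c d) = outer_comb N x y (cnj a) (cnj c) (cnj b) (cnj d)"
  by (rule eq_matI) (auto simp: ctrans_def outer_comb_def algebra_simps)

lemma smult_outer_comb:
  "s \<cdot>\<^sub>m outer_comb N x y a b c d = outer_comb N x y (s * a) (s * b) (s * c) (s * d)"
  by (rule eq_matI) (auto simp: outer_comb_def algebra_simps)

lemma mult_outer_comb:
  fixes N :: nat and x y :: "nat \<Rightarrow> complex" and a b c d :: complex
  defines "gxx \<equiv> inner_on {..<N} x x" and "gxy \<equiv> inner_on {..<N} x y"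
    and "gyx \<equiv> inner_on {..<N} y x" and "gyy \<equiv> inner_on {..<N} y y"
  defines "p \<equiv> a * gxx + b * gxy" and "q \<equiv> a * gyx + b * gyy"
    and "r \<equiv> c * gxx + d * gxy" and "s \<equiv> c * gyx + d * gyy"
  shows "outer_comb N x y a b c d * outer_comb N x y a' b' c' d' =
    outer_comb N x y (p * a' + q * c') (p * b' + q * d') (r * a' + s * c') (r * b' + s * d')"
    (is "_ = ?R")
proof (rule eq_matI)
  have bilinear: "(\<Sum>k<N. (\<alpha> * cnj (x k) + \<beta> * cnj (y k)) * (x k * \<gamma> + y k * \<delta>))
      = \<alpha> * \<gamma> * gxx + \<alpha> * \<delta> * gyx + \<beta> * \<gamma> * gxy + \<beta> * \<delta> * gyy"
    for \<alpha> \<beta> \<gamma> \<delta>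
    unfolding gxx_def gxy_def gyx_def gyy_def inner_on_def sum_distrib_left sum.distrib[symmetric]
    by (intro sum.cong) (simp_all add: algebra_simps)
  fix i j
  assume "i < dim_row ?R" "j < dim_col ?R"
  then have ij: "i < N" "j < N" by (simp_all add: outer_comb_def)
  have "(outer_comb N x y a b c d * outer_comb N x y a' b' c' d') $$ (i, j) =
      (\<Sum>k<N. ((a * x i + c * y i) * cnj (x k) + (b * x i + d * y i) * cnj (y k))
              * (x k * (a' * cnj (x j) + b' * cnj (y j)) + y k * (c' * cnj (x j) + d' * cnj (y j))))"
    using ij by (simp add: outer_comb_def scalar_prod_def lessThan_atLeast0)
      (intro sum.cong; simp add: algebra_simps)
  also have "\<dots> = ?R $$ (i, j)"
    unfolding bilinear using ij by (simp add: outer_comb_def p_def q_def r_def s_def algebra_simps)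
  finally show "(outer_comb N x y a b c d * outer_comb N x y a' b' c' d') $$ (i, j) = ?R $$ (i, j)" .
qed (simp_all add: outer_comb_def)

definition trace :: "'a :: comm_monoid_add mat \<Rightarrow> 'a" where
  "trace A = (\<Sum>i<dim_row A. A $$ (i, i))"

lemma trace_outer_comb:
  "trace (outer_comb N x y a b c d) =
     a * inner_on {..<N} x x + b * inner_on {..<N} x y + c * inner_on {..<N} y x + d * inner_on {..<N} y y"
  by (simp add: trace_def outer_comb_def inner_on_def sum.distrib sum_distrib_left algebra_simps)

lemma trace_mult_comm:
  fixes A B :: "'a :: comm_semiring_0 mat"
  assumes "A \<in> carrier_mat n m" "B \<in> carrier_mat m n"
  shows "trace (A * B) = trace (B * A)"
proof -
  have "trace (A * B) = (\<Sum>i<n. \<Sum>k<m. A $$ (i, k) * B $$ (k, i))"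
    using assms by (simp add: trace_def scalar_prod_def atLeast0LessThan)
  also have "\<dots> = (\<Sum>k<m. \<Sum>i<n. B $$ (k, i) * A $$ (i, k))"
    by (subst sum.swap) (simp add: mult.commute)
  also have "\<dots> = trace (B * A)"
    using assms by (simp add: trace_def scalar_prod_def atLeast0LessThan)
  finally show ?thesis .
qed

lemma trace_similar_mat_wit:
  fixes A :: "'a :: comm_ring_1 mat"
  assumes "similar_mat_wit A T P Q"
  shows "trace A = trace T"
proof -
  obtain n where "n = dim_row A" by simp
  from similar_mat_witD[OF this assms]
  have c: "T \<in> carrier_mat n n" "P \<in> carrier_mat n n" "Q \<in> carrier_mat n n"
    and QP: "Q * P = 1\<^sub>m n" and A: "A = P * T * Q" by blast+
  have "trace A = trace (Q * (P * T))"
    unfolding A using c by (intro trace_mult_comm[of _ n n]) auto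
  also have "\<dots> = trace T"
    using c QP by (simp flip: assoc_mult_mat[of Q n n P n T n])
  finally show ?thesis .
qed

lemma trace_eq_sum_eigenvalues:
  fixes A :: "'a :: conjugatable_ordered_field mat"
  assumes A: "A \<in> carrier_mat n n" and es: "char_poly A = (\<Prod>e\<leftarrow>es. [:- e, 1:])"
  shows "trace A = sum_list es"
proof -
  obtain T P Q where "schur_decomposition A es = (T, P, Q)"
    by (cases "schur_decomposition A es") auto
  from schur_decomposition[OF A es this]
  have "trace A = trace T" "es = diag_mat T"
    by (auto intro: trace_similar_mat_wit)
  then show ?thesis
    by (simp add: trace_def diag_mat_def interv_sum_list_conv_sum_set_nat lessThan_atLeast0)
qed

lemma order_prod_linear_factors:
  "Polynomial.order a (\<Prod>e\<leftarrow>es. [:- e, 1:]) = count_list es (a :: 'a :: idom)"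
proof (induction es)
  case (Cons e es)
  have "(\<Prod>e\<leftarrow>es. [:- e, 1:]) \<noteq> 0"
    by (auto simp: prod_list_zero_iff)
  then have "[:- e, 1:] * (\<Prod>e\<leftarrow>es. [:- e, 1:]) \<noteq> 0"
    by (subst mult_eq_0_iff) simp
  then have "Polynomial.order a ([:- e, 1:] * (\<Prod>e\<leftarrow>es. [:- e, 1:]))
      = Polynomial.order a [:- e, 1:] + Polynomial.order a (\<Prod>e\<leftarrow>es. [:- e, 1:])"
    by (rule order_mult)
  then show ?case
    using Cons.IH by (simp add: order_linear')
qed simp

lemma sum_list_two_valued:
  assumes "\<forall>e\<in>set es. e = 0 \<or> e = s"
  shows "sum_list es = of_nat (count_list es s) * (s :: 'a :: semiring_1)"
  using assms by (induction es) (auto simp: algebra_simps)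

lemma smult_mat_mult_vec:
  "A \<in> carrier_mat n m \<Longrightarrow> v \<in> carrier_vec m \<Longrightarrow> (k \<cdot>\<^sub>m A) *\<^sub>v v = k \<cdot>\<^sub>v (A *\<^sub>v v)"
  by (intro eq_vecI) (auto simp: scalar_prod_def sum_distrib_left algebra_simps)

lemma eigenvalue_scaled_idempotent:
  fixes B :: "'a :: field mat"
  assumes B: "B \<in> carrier_mat n n" and BB: "B * B = s \<cdot>\<^sub>m B" and "eigenvalue B e"
  shows "e = 0 \<or> e = s"
proof -
  obtain v where "eigenvector B v e"
    using assms unfolding eigenvalue_def by blast
  then have v: "v \<in> carrier_vec n" "v \<noteq> 0\<^sub>v n" and Bv: "B *\<^sub>v v = e \<cdot>\<^sub>v v"
    using B unfolding eigenvector_def by auto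
  have "(e * e) \<cdot>\<^sub>v v = B *\<^sub>v (B *\<^sub>v v)"
    using B v Bv by (simp add: mult_mat_vec smult_smult_assoc)
  also have "\<dots> = (B * B) *\<^sub>v v"
    using B v by (simp add: assoc_mult_mat_vec)
  also have "\<dots> = (s * e) \<cdot>\<^sub>v v"
    using B v Bv BB by (simp add: smult_mat_mult_vec smult_smult_assoc)
  finally have eq: "(e * e) \<cdot>\<^sub>v v = (s * e) \<cdot>\<^sub>v v" .
  obtain i where i: "i < n" "v $ i \<noteq> 0"
    using v by (metis eq_vecI carrier_vecD index_zero_vec)
  from arg_cong[OF eq, of "\<lambda>w. w $ i"] i v have "e * (e - s) = 0"
    by (simp add: algebra_simps)
  then show ?thesis
    by simp
qed

lemma sum_sqrt_spectrum_scaled_idempotent: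
  fixes B :: "complex mat"
  assumes B: "B \<in> carrier_mat N N" and BB: "B * B = complex_of_real t \<cdot>\<^sub>m B"
    and trB: "trace B = 2 * complex_of_real t" and "t \<ge> 0"
  shows "(\<Sum>z\<in>{z. poly (char_poly B) z = 0}. real (Polynomial.order z (char_poly B)) * sqrt (Re z)) = 2 * sqrt t"
proof -
  let ?s = "complex_of_real t"
  obtain es where es: "char_poly B = (\<Prod>e\<leftarrow>es. [:- e, 1:])"
    using char_poly_factorized[OF B] by blast
  have roots: "{z. poly (char_poly B) z = 0} = set es"
    unfolding es poly_prod_list by (auto simp: prod_list_zero_iff o_def)
  have two_valued: "\<forall>e\<in>set es. e = 0 \<or> e = ?s"
    using eigenvalue_scaled_idempotent[OF B BB] eigenvalue_root_char_poly[OF B] roots by auto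
  have "of_nat (count_list es ?s) * ?s = 2 * ?s"
    using trace_eq_sum_eigenvalues[OF B es] sum_list_two_valued[OF two_valued] trB by simp
  then have count: "t \<noteq> 0 \<Longrightarrow> count_list es ?s = 2"
    by (metis mult_cancel_right of_nat_eq_iff of_nat_numeral of_real_eq_0_iff)
  have "(\<Sum>z\<in>set es. real (Polynomial.order z (char_poly B)) * sqrt (Re z))
      = (\<Sum>z\<in>{0, ?s}. real (count_list es z) * sqrt (Re z))"
    using two_valued
    by (intro sum.mono_neutral_cong_left) (auto simp: es order_prod_linear_factors count_list_0_iff)
  also have "\<dots> = real (count_list es ?s) * sqrt t"
    by (cases "t = 0") simp_all
  also have "\<dots> = 2 * sqrt t"
    using count by (cases "t = 0") simp_all
  finally show ?thesis
    unfolding roots .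
qed

lemma norm_on_pure_state: "pure_state n \<psi> \<Longrightarrow> norm_on {..<2^n} \<psi> = 1"
  by (simp add: pure_state_def norm_on_def L2_set_def)

lemma trace_dist_proj:
  assumes "pure_state n \<psi>" "pure_state n \<phi>"
  shows "trace_dist (proj n \<psi>) (proj n \<phi>) = sqrt (1 - (cmod (inner_on {..<2^n} \<psi> \<phi>))\<^sup>2)"
proof -
  define N where "N = (2::nat)^n"
  define c where "c = inner_on {..<N} \<psi> \<phi>"
  define t where "t = 1 - (cmod c)\<^sup>2"
  have unit: "inner_on {..<N} \<psi> \<psi> = 1" "inner_on {..<N} \<phi> \<phi> = 1"
    using assms by (simp_all add: N_def inner_on_self norm_on_pure_state)
  have gram: "inner_on {..<N} \<psi> \<phi> = c" "inner_on {..<N} \<phi> \<psi> = cnj c"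
    by (simp_all add: c_def inner_on_commute[of _ \<phi> \<psi>])
  have "cmod c \<le> 1"
    using norm_inner_on_le[of "{..<N}" \<psi> \<phi>] assms by (simp add: c_def N_def norm_on_pure_state)
  then have "t \<ge> 0"
    by (simp add: t_def power_le_one)
  have t_eq: "complex_of_real t = 1 - c * cnj c"
    by (simp only: t_def of_real_diff of_real_1 complex_norm_square)
  define A where "A = outer_comb N \<psi> \<phi> 1 0 0 (-1)"
  define B where "B = outer_comb N \<psi> \<phi> 1 (- cnj c) (- c) 1"
  have "proj n \<psi> - proj n \<phi> = A"
    by (rule eq_matI) (auto simp: proj_def A_def N_def outer_comb_def)
  moreover have "ctrans A * A = B"
    by (simp add: A_def B_def ctrans_outer_comb mult_outer_comb unit gram)
  ultimately have "trace_norm (proj n \<psi> - proj n \<phi>)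
      = (\<Sum>z\<in>{z. poly (char_poly B) z = 0}. real (Polynomial.order z (char_poly B)) * sqrt (Re z))"
    by (simp add: trace_norm_def)
  also have "\<dots> = 2 * sqrt t"
  proof (rule sum_sqrt_spectrum_scaled_idempotent)
    show "B \<in> carrier_mat N N"
      by (simp add: B_def)
    show "B * B = complex_of_real t \<cdot>\<^sub>m B"
      by (simp add: B_def mult_outer_comb smult_outer_comb unit gram t_eq algebra_simps)
    show "trace B = 2 * complex_of_real t"
      by (simp add: B_def trace_outer_comb unit gram t_eq)
  qed fact
  finally show ?thesis
    by (simp add: trace_dist_def t_def c_def N_def)
qed

lemma abs_diff_squares_le:
  fixes x x' y y' r :: real
  assumes x: "x\<^sup>2 + x'\<^sup>2 = 1" and y: "y\<^sup>2 + y'\<^sup>2 = 1"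
    and "0 \<le> r" and r: "r \<le> x * y + x' * y'"
  shows "\<bar>x\<^sup>2 - y\<^sup>2\<bar> \<le> sqrt 2 * sqrt (1 - r)"
proof -
  define m where "m = x * y + x' * y'"
  have "(x\<^sup>2 + x'\<^sup>2) * (y\<^sup>2 + y'\<^sup>2) = m\<^sup>2 + (x * y' - x' * y)\<^sup>2"
    by (simp add: m_def power2_eq_square algebra_simps)
  then have lagrange: "1 - m\<^sup>2 = (x * y' - x' * y)\<^sup>2"
    using x y by simp
  have "(x\<^sup>2 + x'\<^sup>2) * (y\<^sup>2 + y'\<^sup>2) = (x * y' + x' * y)\<^sup>2 + (x * y - x' * y')\<^sup>2"
    by (simp add: power2_eq_square algebra_simps)
  then have "(x * y' + x' * y)\<^sup>2 + (x * y - x' * y')\<^sup>2 = 1"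
    using x y by simp
  then have cross: "(x * y' + x' * y)\<^sup>2 \<le> 1"
    using zero_le_power2[of "x * y - x' * y'"] by linarith
  have "x\<^sup>2 - y\<^sup>2 = x\<^sup>2 * (y\<^sup>2 + y'\<^sup>2) - y\<^sup>2 * (x\<^sup>2 + x'\<^sup>2)"
    using x y by simp
  also have "\<dots> = (x * y' - x' * y) * (x * y' + x' * y)"
    by (simp add: power2_eq_square algebra_simps)
  finally have "(x\<^sup>2 - y\<^sup>2)\<^sup>2 = (x * y' - x' * y)\<^sup>2 * (x * y' + x' * y)\<^sup>2"
    by (simp add: power_mult_distrib)
  also have "\<dots> \<le> 1 - m\<^sup>2"
    using cross lagrange by (simp add: mult_left_le)
  also have "\<dots> \<le> 1 - r\<^sup>2"
    using \<open>0 \<le> r\<close> r by (simp add: m_def power_mono)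
  also have "\<dots> = (1 - r) * (1 + r)"
    by (simp add: power2_eq_square algebra_simps)
  also have "\<dots> \<le> (1 - r) * 2"
  proof -
    have "m\<^sup>2 \<le> 1"
      using lagrange zero_le_power2[of "x * y' - x' * y"] by linarith
    then have "r \<le> 1"
      using power2_le_imp_le[of m 1] r by (simp add: m_def)
    then show ?thesis
      by (intro mult_left_mono) simp_all
  qed
  finally have "sqrt ((x\<^sup>2 - y\<^sup>2)\<^sup>2) \<le> sqrt ((1 - r) * 2)"
    by (rule real_sqrt_le_mono)
  then show ?thesis
    by (simp only: real_sqrt_abs real_sqrt_mult mult.commute)
qed

theorem mainTheorem14:
  fixes n :: nat and \<psi> \<phi> :: "nat \<Rightarrow> complex"
  assumes "pure_state n \<psi>" and "pure_state n \<phi>"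
  shows "\<bar>C_ent n \<psi> - C_ent n \<phi>\<bar> \<le> sqrt 2 * trace_dist (proj n \<psi>) (proj n \<phi>)"
proof -
  let ?S = "basis_pairs n" and ?P = "swap_average n"
  let ?X = "two_copy \<psi>" and ?Y = "two_copy \<phi>"
  have orth: "orth_proj_on ?S ?P"
    by (rule orth_proj_on_swap_average)
  have "(cmod (inner_on {..<2^n} \<psi> \<phi>))\<^sup>2 = cmod (inner_on ?S ?X ?Y)"
    by (simp add: inner_on_two_copy norm_power)
  also have "\<dots> \<le> norm_on ?S (?P ?X) * norm_on ?S (?P ?Y)
                + norm_on ?S (\<lambda>p. ?X p - ?P ?X p) * norm_on ?S (\<lambda>p. ?Y p - ?P ?Y p)"
    by (rule orth_proj_on_norm_inner_le[OF orth])
  finally have overlap: "(cmod (inner_on {..<2^n} \<psi> \<phi>))\<^sup>2 \<le> \<dots>" .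
  have "(norm_on ?S (?P ?X))\<^sup>2 + (norm_on ?S (\<lambda>p. ?X p - ?P ?X p))\<^sup>2 = 1"
    using orth_proj_on_pythagoras[OF orth, of ?X] norm_on_two_copy[OF assms(1)] by simp
  moreover have "(norm_on ?S (?P ?Y))\<^sup>2 + (norm_on ?S (\<lambda>p. ?Y p - ?P ?Y p))\<^sup>2 = 1"
    using orth_proj_on_pythagoras[OF orth, of ?Y] norm_on_two_copy[OF assms(2)] by simp
  ultimately have "\<bar>(norm_on ?S (?P ?X))\<^sup>2 - (norm_on ?S (?P ?Y))\<^sup>2\<bar>
      \<le> sqrt 2 * sqrt (1 - (cmod (inner_on {..<2^n} \<psi> \<phi>))\<^sup>2)"
    using overlap by (intro abs_diff_squares_le) simp_all
  then show ?thesis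
    by (simp add: C_ent_eq_norm_swap_average trace_dist_proj[OF assms] abs_minus_commute)
qed

end
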